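(* Let $R$ be a commutative hyperring with no zero divisors (i.e. $xy=0$ implies $x=0$ or $y=0$). If $I$ is a relational subhyperring of $R$ such that $xy\in I$ for all $x\in R$ and $y\in I$, then $I$ is a hyperideal of $R$.
   Context: A canonical hypergroup is a triple $(H,+,0)$ where $H\neq\emptyset$, $+$ assigns to each $(x,y)\in H\times H$ a subset $x+y\subseteq H$ (for $A,B\subseteq H$ put $A+B:=\bigcup_{a\in A,b\in B}a+b$, $x+A:=\{x\}+A$), and $0\in H$, such that for all $x,y,z\in H$: $(x+y)+z=x+(y+z)$; $x+y=y+x$; there is a unique $-x\in H$ with $0\in x+(-x)$; and $z\in x+y$ implies $y\in z+(-x)$. Write $x-y:=x+(-y)$. A (commutative) hyperring is $(R,+,\cdot,0)$ with $(R,+,0)$ a canonical hypergroup, $(R,\cdot)$ a commutative semigroup with $0x=0$ for all $x$, and $x(y+z)=xy+xz$ for all $x,y,z$ (where $xA:=\{xa:a\in A\}$). A relational subhyperring of $R$ is a multiplicatively closed subset $S\subseteq R$ such that, with the induced operation $x+_Sy:=(x+y)\cap S$, $(S,+_S,\cdot,0)$ is a hyperring. A (traditional) subhyperring is a subset $S$ with $0\in S$ and $x-y\subseteq S$, $xy\in S$ for all $x,y\in S$. A hyperideal of $R$ is a subhyperring $I$ with $xy\in I$ for all $x\in R$, $y\in I$. *)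

theory Defs
  imports Main
begin

text \<open>Everything is relativised
  to the carrier so that induced substructures can be expressed.\<close>

definition set_add :: "('a \<Rightarrow> 'a \<Rightarrow> 'a set) \<Rightarrow> 'a set \<Rightarrow> 'a set \<Rightarrow> 'a set" where
  "set_add add A B = (\<Union>a\<in>A. \<Union>b\<in>B. add a b)"

definition hneg :: "'a set \<Rightarrow> ('a \<Rightarrow> 'a \<Rightarrow> 'a set) \<Rightarrow> 'a \<Rightarrow> 'a \<Rightarrow> 'a" where
  "hneg H add z x = (THE y. y \<in> H \<and> z \<in> add x y)"

definition canonical_hypergroup :: "'a set \<Rightarrow> ('a \<Rightarrow> 'a \<Rightarrow> 'a set) \<Rightarrow> 'a \<Rightarrow> bool" where
  "canonical_hypergroup H add z \<longleftrightarrow>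
     H \<noteq> {} \<and> z \<in> H \<and>
     (\<forall>x\<in>H. \<forall>y\<in>H. add x y \<subseteq> H) \<and>
     (\<forall>x\<in>H. \<forall>y\<in>H. \<forall>w\<in>H. set_add add (add x y) {w} = set_add add {x} (add y w)) \<and>
     (\<forall>x\<in>H. \<forall>y\<in>H. add x y = add y x) \<and>
     (\<forall>x\<in>H. \<exists>!y. y \<in> H \<and> z \<in> add x y) \<and>
     (\<forall>x\<in>H. \<forall>y\<in>H. \<forall>w\<in>H. w \<in> add x y \<longrightarrow> y \<in> add w (hneg H add z x))"

definition hyperring :: "'a set \<Rightarrow> ('a \<Rightarrow> 'a \<Rightarrow> 'a set) \<Rightarrow> ('a \<Rightarrow> 'a \<Rightarrow> 'a) \<Rightarrow> 'a \<Rightarrow> bool" where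
  "hyperring R add mul z \<longleftrightarrow>
     canonical_hypergroup R add z \<and>
     (\<forall>x\<in>R. \<forall>y\<in>R. mul x y \<in> R) \<and>
     (\<forall>x\<in>R. \<forall>y\<in>R. \<forall>w\<in>R. mul (mul x y) w = mul x (mul y w)) \<and>
     (\<forall>x\<in>R. \<forall>y\<in>R. mul x y = mul y x) \<and>
     (\<forall>x\<in>R. mul z x = z) \<and>
     (\<forall>x\<in>R. \<forall>y\<in>R. \<forall>w\<in>R. mul x ` add y w = set_add add {mul x y} {mul x w})"

definition no_zero_divisors_hr :: "'a set \<Rightarrow> ('a \<Rightarrow> 'a \<Rightarrow> 'a) \<Rightarrow> 'a \<Rightarrow> bool" where
  "no_zero_divisors_hr R mul z \<longleftrightarrow>
     (\<forall>x\<in>R. \<forall>y\<in>R. mul x y = z \<longrightarrow> x = z \<or> y = z)"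

definition relational_subhyperring ::
  "'a set \<Rightarrow> ('a \<Rightarrow> 'a \<Rightarrow> 'a set) \<Rightarrow> ('a \<Rightarrow> 'a \<Rightarrow> 'a) \<Rightarrow> 'a \<Rightarrow> 'a set \<Rightarrow> bool" where
  "relational_subhyperring R add mul z S \<longleftrightarrow>
     S \<subseteq> R \<and>
     (\<forall>x\<in>S. \<forall>y\<in>S. mul x y \<in> S) \<and>
     hyperring S (\<lambda>x y. add x y \<inter> S) mul z"

definition subhyperring ::
  "'a set \<Rightarrow> ('a \<Rightarrow> 'a \<Rightarrow> 'a set) \<Rightarrow> ('a \<Rightarrow> 'a \<Rightarrow> 'a) \<Rightarrow> 'a \<Rightarrow> 'a set \<Rightarrow> bool" where
  "subhyperring R add mul z S \<longleftrightarrow>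
     S \<subseteq> R \<and> z \<in> S \<and>
     (\<forall>x\<in>S. \<forall>y\<in>S. add x (hneg R add z y) \<subseteq> S \<and> mul x y \<in> S)"

definition hyperideal ::
  "'a set \<Rightarrow> ('a \<Rightarrow> 'a \<Rightarrow> 'a set) \<Rightarrow> ('a \<Rightarrow> 'a \<Rightarrow> 'a) \<Rightarrow> 'a \<Rightarrow> 'a set \<Rightarrow> bool" where
  "hyperideal R add mul z I \<longleftrightarrow>
     subhyperring R add mul z I \<and> (\<forall>x\<in>R. \<forall>y\<in>I. mul x y \<in> I)"

end

theory Submission
  imports Defs
begin

text \<open>Let \<open>x, w \<in> I\<close> and \<open>t \<in> x + w\<close>. If \<open>I\<close> contains some \<open>a \<noteq> 0\<close>, then \<open>at \<in> I\<close>
  lies in \<open>ax + aw\<close>, so distributivity inside \<open>I\<close> gives \<open>at = at'\<close> for some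
  \<open>t' \<in> (x + w) \<inter> I\<close>; without zero divisors multiplication by \<open>a\<close> is injective, hence
  \<open>t = t' \<in> I\<close>. If \<open>I = {0}\<close>, the axioms do not make \<open>0\<close> neutral, but \<open>I\<close> being a
  hypergroup gives \<open>0 \<in> 0 + 0\<close>, and reversibility then forces \<open>0 + 0 = {0}\<close>. Inverses in
  \<open>I\<close> are inverses in \<open>R\<close> by uniqueness, so \<open>I\<close> is closed under \<open>x - y\<close>.\<close>

lemma set_add_singletons [simp]: "set_add add {a} {b} = add a b"
  unfolding set_add_def by simp

lemma canonical_hypergroupD:
  assumes "canonical_hypergroup H add z"
  shows canonical_hypergroup_zero: "z \<in> H"
    and canonical_hypergroup_add_closed: "\<lbrakk>x \<in> H; y \<in> H\<rbrakk> \<Longrightarrow> add x y \<subseteq> H"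
    and canonical_hypergroup_add_commute: "\<lbrakk>x \<in> H; y \<in> H\<rbrakk> \<Longrightarrow> add x y = add y x"
    and canonical_hypergroup_inverse_unique: "x \<in> H \<Longrightarrow> \<exists>!y. y \<in> H \<and> z \<in> add x y"
    and canonical_hypergroup_reversible:
      "\<lbrakk>x \<in> H; y \<in> H; w \<in> H; w \<in> add x y\<rbrakk> \<Longrightarrow> y \<in> add w (hneg H add z x)"
  using assms unfolding canonical_hypergroup_def by simp_all

lemma hyperringD:
  assumes "hyperring R add mul z"
  shows hyperring_canonical_hypergroup: "canonical_hypergroup R add z"
    and hyperring_mul_closed: "\<lbrakk>x \<in> R; y \<in> R\<rbrakk> \<Longrightarrow> mul x y \<in> R"
    and hyperring_mul_commute: "\<lbrakk>x \<in> R; y \<in> R\<rbrakk> \<Longrightarrow> mul x y = mul y x"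
    and hyperring_mul_zero_left: "x \<in> R \<Longrightarrow> mul z x = z"
    and hyperring_distrib:
      "\<lbrakk>x \<in> R; y \<in> R; w \<in> R\<rbrakk> \<Longrightarrow> mul x ` add y w = add (mul x y) (mul x w)"
  using assms unfolding hyperring_def by simp_all

lemma relational_subhyperringD:
  assumes "relational_subhyperring R add mul z I"
  shows relational_subhyperring_subset: "I \<subseteq> R"
    and relational_subhyperring_hyperring: "hyperring I (\<lambda>x y. add x y \<inter> I) mul z"
  using assms unfolding relational_subhyperring_def by blast+

lemma canonical_hypergroup_hneg:
  assumes "canonical_hypergroup H add z" and "x \<in> H"
  shows "hneg H add z x \<in> H" and "z \<in> add x (hneg H add z x)"
  using theI'[OF canonical_hypergroup_inverse_unique[OF assms]] unfolding hneg_def by auto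

lemma canonical_hypergroup_hneg_unique:
  assumes "canonical_hypergroup H add z" and "x \<in> H" and "y \<in> H" and "z \<in> add x y"
  shows "y = hneg H add z x"
  using canonical_hypergroup_inverse_unique[OF assms(1,2)] canonical_hypergroup_hneg[OF assms(1,2)]
    assms(3,4) by blast

lemma canonical_hypergroup_zero_add_zero:
  assumes cg: "canonical_hypergroup H add z" and zz: "z \<in> add z z"
  shows "add z z = {z}"
proof -
  have zH: "z \<in> H" using canonical_hypergroup_zero[OF cg] .
  have neg_zero: "hneg H add z z = z"
    using canonical_hypergroup_hneg_unique[OF cg zH zH zz] by simp
  have "t = z" if t: "t \<in> add z z" for t
  proof -
    have tH: "t \<in> H" using canonical_hypergroup_add_closed[OF cg zH zH] t by blast
    have "z \<in> add t z"
      using canonical_hypergroup_reversible[OF cg zH zH tH t] neg_zero by simp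
    then have "z \<in> add z t"
      using canonical_hypergroup_add_commute[OF cg zH tH] by simp
    then show "t = z"
      using canonical_hypergroup_hneg_unique[OF cg zH tH] neg_zero by simp
  qed
  then show ?thesis using zz by blast
qed

lemma hyperring_mul_left_cancel:
  assumes hr: "hyperring R add mul z" and nzd: "no_zero_divisors_hr R mul z"
    and a: "a \<in> R" "a \<noteq> z" and t: "t \<in> R" "t' \<in> R" and eq: "mul a t = mul a t'"
  shows "t = t'"
proof -
  note cg = hyperring_canonical_hypergroup[OF hr]
  have zR: "z \<in> R" using canonical_hypergroup_zero[OF cg] .
  define n where "n = hneg R add z t'"
  have n: "n \<in> R" "z \<in> add t' n"
    using canonical_hypergroup_hneg[OF cg t(2)] unfolding n_def by auto
  have "mul a ` add t n = mul a ` add t' n"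
    using hyperring_distrib[OF hr a(1)] t n(1) eq by simp
  moreover have "mul a z = z"
    using hyperring_mul_zero_left[OF hr a(1)] hyperring_mul_commute[OF hr a(1) zR] by simp
  ultimately have "z \<in> mul a ` add t n" using n(2) by force
  then obtain u where u: "u \<in> add t n" "mul a u = z" by blast
  have "u \<in> R" using u(1) canonical_hypergroup_add_closed[OF cg t(1) n(1)] by blast
  then have "u = z" using nzd a u(2) unfolding no_zero_divisors_hr_def by blast
  then have "z \<in> add n t" "z \<in> add n t'"
    using u(1) n canonical_hypergroup_add_commute[OF cg n(1)] t by auto
  then show "t = t'"
    using canonical_hypergroup_hneg_unique[OF cg n(1)] t by (metis (no_types))
qed

lemma relational_subhyperring_hneg_closed:
  assumes cg: "canonical_hypergroup R add z" and sub: "relational_subhyperring R add mul z I"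
    and y: "y \<in> I"
  shows "hneg R add z y \<in> I"
proof -
  note IR = relational_subhyperring_subset[OF sub]
  note cgI = hyperring_canonical_hypergroup[OF relational_subhyperring_hyperring[OF sub]]
  obtain y' where y': "y' \<in> I" "z \<in> add y y'"
    using canonical_hypergroup_inverse_unique[OF cgI y] by blast
  have "y' = hneg R add z y"
    using canonical_hypergroup_hneg_unique[OF cg] y y' IR by blast
  then show ?thesis using y' by simp
qed

lemma relational_subhyperring_add_closed:
  assumes hr: "hyperring R add mul z" and nzd: "no_zero_divisors_hr R mul z"
    and sub: "relational_subhyperring R add mul z I"
    and absorb: "\<forall>x\<in>R. \<forall>y\<in>I. mul x y \<in> I"
    and x: "x \<in> I" and w: "w \<in> I"
  shows "add x w \<subseteq> I"
proof
  fix t assume t: "t \<in> add x w"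
  note cg = hyperring_canonical_hypergroup[OF hr]
  note IR = relational_subhyperring_subset[OF sub]
  note hI = relational_subhyperring_hyperring[OF sub]
  have xR: "x \<in> R" and wR: "w \<in> R" using x w IR by auto
  have tR: "t \<in> R" using t canonical_hypergroup_add_closed[OF cg xR wR] by blast
  show "t \<in> I"
  proof (cases "\<exists>a\<in>I. a \<noteq> z")
    case True
    then obtain a where a: "a \<in> I" "a \<noteq> z" by blast
    have aR: "a \<in> R" using a IR by auto
    have "mul a t \<in> add (mul a x) (mul a w)"
      using hyperring_distrib[OF hr aR xR wR] t by blast
    moreover have "mul a t \<in> I"
      using absorb tR a(1) hyperring_mul_commute[OF hr aR tR] by metis
    ultimately have "mul a t \<in> mul a ` (add x w \<inter> I)"
      using hyperring_distrib[OF hI a(1) x w] by simp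
    then obtain t' where t': "t' \<in> add x w" "t' \<in> I" "mul a t = mul a t'" by blast
    have "t = t'"
      using hyperring_mul_left_cancel[OF hr nzd aR a(2) tR] t' IR by blast
    then show ?thesis using t' by simp
  next
    case False
    note cgI = hyperring_canonical_hypergroup[OF hI]
    have zI: "z \<in> I" using canonical_hypergroup_zero[OF cgI] .
    obtain y where "y \<in> I" "z \<in> add z y"
      using canonical_hypergroup_inverse_unique[OF cgI zI] by blast
    then have "z \<in> add z z" using False by auto
    moreover have "x = z" "w = z" using False x w by blast+
    ultimately have "add x w = {z}"
      using canonical_hypergroup_zero_add_zero[OF cg] by simp
    then show ?thesis using t zI by simp
  qed
qed

theorem lemma2p31:
  assumes "hyperring R add mul z"
    and "no_zero_divisors_hr R mul z"
    and "relational_subhyperring R add mul z I"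
    and "\<forall>x\<in>R. \<forall>y\<in>I. mul x y \<in> I"
  shows "hyperideal R add mul z I"
proof -
  note cg = hyperring_canonical_hypergroup[OF assms(1)]
  note IR = relational_subhyperring_subset[OF assms(3)]
  have zI: "z \<in> I"
    using canonical_hypergroup_zero[OF hyperring_canonical_hypergroup[OF
        relational_subhyperring_hyperring[OF assms(3)]]] .
  have "add x (hneg R add z y) \<subseteq> I" if "x \<in> I" "y \<in> I" for x y
    using relational_subhyperring_add_closed[OF assms]
      relational_subhyperring_hneg_closed[OF cg assms(3)] that by blast
  moreover have "mul x y \<in> I" if "x \<in> I" "y \<in> I" for x y
    using assms(4) IR that by blast
  ultimately show ?thesis
    unfolding hyperideal_def subhyperring_def using IR zI assms(4) by blast
qed

end
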